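(* Let $G$ be a simplicial group and $\tilde G$ its dummy. Then the geometric realization $|\tilde G|$ is contractible.
   Context: Let $B$ be the cosimplicial simplicial pointed set with $B^n_m$ the set of non-strictly increasing partial maps $b\colon[m]\dashrightarrow[n]$ (with domain $\operatorname{dom}b\subset[m]$), marked element $o^n_m$ the map with empty domain; the simplicial structure in $m$ is given by precomposition (for $\theta\colon[m']\to[m]$, $b\mapsto b\circ\theta$ with domain $\theta^{-1}(\operatorname{dom}b)$) and the cosimplicial structure in $n$ by postcomposition. The dummy $\tilde G$ is the simplicial group with $\tilde G_n$ the group (under pointwise multiplication) of base-point-preserving simplicial maps $B^n\to G$ (the marked elements going to $1$), with structure homomorphisms induced by the cosimplicial structure of $B$. *)

theory Defs
  imports "HOL-Analysis.Analysis" "HOL-Homology.Homology" "HOL-Algebra.Group"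
begin

definition mono_maps :: "nat \<Rightarrow> nat \<Rightarrow> (nat \<Rightarrow> nat) set" where
  "mono_maps m n = {\<theta>. \<theta> \<in> {..m} \<rightarrow>\<^sub>E {..n} \<and> mono_on {..m} \<theta>}"

definition id_map :: "nat \<Rightarrow> nat \<Rightarrow> nat" where
  "id_map n = restrict id {..n}"

definition simplicial_set ::
  "(nat \<Rightarrow> 'x set) \<Rightarrow> (nat \<Rightarrow> nat \<Rightarrow> (nat \<Rightarrow> nat) \<Rightarrow> 'x \<Rightarrow> 'x) \<Rightarrow> bool" where
  "simplicial_set X act \<longleftrightarrow>
     (\<forall>m n \<theta> x. \<theta> \<in> mono_maps m n \<longrightarrow> x \<in> X n \<longrightarrow> act m n \<theta> x \<in> X m) \<and>
     (\<forall>n x. x \<in> X n \<longrightarrow> act n n (id_map n) x = x) \<and>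
     (\<forall>k m n \<psi> \<theta> x. \<psi> \<in> mono_maps k m \<longrightarrow> \<theta> \<in> mono_maps m n \<longrightarrow> x \<in> X n \<longrightarrow>
        act k m \<psi> (act m n \<theta> x) = act k n (compose {..k} \<theta> \<psi>) x)"

definition simplicial_group ::
  "(nat \<Rightarrow> 'g monoid) \<Rightarrow> (nat \<Rightarrow> nat \<Rightarrow> (nat \<Rightarrow> nat) \<Rightarrow> 'g \<Rightarrow> 'g) \<Rightarrow> bool" where
  "simplicial_group Gr act \<longleftrightarrow>
     simplicial_set (\<lambda>n. carrier (Gr n)) act \<and>
     (\<forall>n. group (Gr n)) \<and>
     (\<forall>m n \<theta>. \<theta> \<in> mono_maps m n \<longrightarrow> act m n \<theta> \<in> hom (Gr n) (Gr m))"

text \<open>B n m: non-strictly increasing partial maps [m] \<rightharpoonup> [n].\<close>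
definition Bset :: "nat \<Rightarrow> nat \<Rightarrow> (nat \<Rightarrow> nat option) set" where
  "Bset n m = {b. (\<forall>i k. b i = Some k \<longrightarrow> i \<le> m \<and> k \<le> n) \<and>
                  (\<forall>i j k l. i \<le> j \<longrightarrow> b i = Some k \<longrightarrow> b j = Some l \<longrightarrow> k \<le> l)}"

text \<open>The marked element: the map with empty domain.\<close>
definition Bmark :: "nat \<Rightarrow> nat option" where
  "Bmark = (\<lambda>_. None)"

text \<open>Simplicial structure: precomposition with \<theta> : [m'] \<rightarrow> [m].\<close>
definition Bprecomp :: "nat \<Rightarrow> (nat \<Rightarrow> nat option) \<Rightarrow> (nat \<Rightarrow> nat) \<Rightarrow> nat \<Rightarrow> nat option" where
  "Bprecomp m' b \<theta> = (\<lambda>i. if i \<le> m' then b (\<theta> i) else None)"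

text \<open>Cosimplicial structure: postcomposition with \<psi> : [n] \<rightarrow> [n'].\<close>
definition Bpostcomp :: "(nat \<Rightarrow> nat) \<Rightarrow> (nat \<Rightarrow> nat option) \<Rightarrow> nat \<Rightarrow> nat option" where
  "Bpostcomp \<psi> b = (\<lambda>i. map_option \<psi> (b i))"

text \<open>n-simplices of the dummy: base-point-preserving simplicial maps B^n \<rightarrow> G,
  given by their components f m : B n m \<rightarrow> G m (extensional).\<close>
definition dummy_simplices ::
  "(nat \<Rightarrow> 'g monoid) \<Rightarrow> (nat \<Rightarrow> nat \<Rightarrow> (nat \<Rightarrow> nat) \<Rightarrow> 'g \<Rightarrow> 'g) \<Rightarrow> nat
     \<Rightarrow> (nat \<Rightarrow> (nat \<Rightarrow> nat option) \<Rightarrow> 'g) set" where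
  "dummy_simplices Gr act n =
     {f. (\<forall>m. \<forall>b \<in> Bset n m. f m b \<in> carrier (Gr m)) \<and>
         (\<forall>m b. b \<notin> Bset n m \<longrightarrow> f m b = undefined) \<and>
         (\<forall>m. f m Bmark = \<one>\<^bsub>Gr m\<^esub>) \<and>
         (\<forall>m' m \<theta> b. \<theta> \<in> mono_maps m' m \<longrightarrow> b \<in> Bset n m \<longrightarrow>
             f m' (Bprecomp m' b \<theta>) = act m' m \<theta> (f m b))}"

text \<open>Structure maps of the dummy, induced by the cosimplicial structure of B:
  for \<psi> : [n'] \<rightarrow> [n], f \<mapsto> f \<circ> \<psi>_*.\<close>
definition dummy_act ::
  "nat \<Rightarrow> nat \<Rightarrow> (nat \<Rightarrow> nat) \<Rightarrow> (nat \<Rightarrow> (nat \<Rightarrow> nat option) \<Rightarrow> 'g)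
     \<Rightarrow> (nat \<Rightarrow> (nat \<Rightarrow> nat option) \<Rightarrow> 'g)" where
  "dummy_act n' n \<psi> f = (\<lambda>m b. if b \<in> Bset n' m then f m (Bpostcomp \<psi> b) else undefined)"

definition quotient_topology :: "'a topology \<Rightarrow> ('a \<Rightarrow> 'b) \<Rightarrow> 'b topology" where
  "quotient_topology X f =
     topology (\<lambda>U. U \<subseteq> f ` topspace X \<and> openin X {x \<in> topspace X. f x \<in> U})"

lemma istopology_quotient_topology:
  "istopology (\<lambda>U. U \<subseteq> f ` topspace X \<and> openin X {x \<in> topspace X. f x \<in> U})"
proof -
  have 1: "{x \<in> topspace X. f x \<in> S \<inter> T} = {x \<in> topspace X. f x \<in> S} \<inter> {x \<in> topspace X. f x \<in> T}" for S T
    by auto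
  have 2: "{x \<in> topspace X. f x \<in> \<Union>K} = (\<Union>U\<in>K. {x \<in> topspace X. f x \<in> U})" for K
    by auto
  show ?thesis
    unfolding istopology_def 1 2 by blast
qed

text \<open>Covariant action of \<theta> : [m] \<rightarrow> [n] on standard simplices \<Delta>^m \<rightarrow> \<Delta>^n.\<close>
definition simplex_push :: "nat \<Rightarrow> (nat \<Rightarrow> nat) \<Rightarrow> (nat \<Rightarrow> real) \<Rightarrow> nat \<Rightarrow> real" where
  "simplex_push m \<theta> t = (\<lambda>j. \<Sum>i \<in> {i. i \<le> m \<and> \<theta> i = j}. t i)"

definition realization_pre ::
  "(nat \<Rightarrow> 'x set) \<Rightarrow> (nat \<times> ('x \<times> (nat \<Rightarrow> real))) topology" where
  "realization_pre X = sum_topology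
     (\<lambda>n. prod_topology (discrete_topology (X n))
                        (subtopology (powertop_real UNIV) (standard_simplex n))) UNIV"

definition realization_rel ::
  "(nat \<Rightarrow> 'x set) \<Rightarrow> (nat \<Rightarrow> nat \<Rightarrow> (nat \<Rightarrow> nat) \<Rightarrow> 'x \<Rightarrow> 'x)
    \<Rightarrow> nat \<times> ('x \<times> (nat \<Rightarrow> real)) \<Rightarrow> nat \<times> ('x \<times> (nat \<Rightarrow> real)) \<Rightarrow> bool" where
  "realization_rel X act p q \<longleftrightarrow>
     (\<exists>m n \<theta> x t. \<theta> \<in> mono_maps m n \<and> x \<in> X n \<and> t \<in> standard_simplex m \<and>
        p = (m, act m n \<theta> x, t) \<and> q = (n, x, simplex_push m \<theta> t))"

text \<open>Geometric realization |X|: the quotient of the disjoint union by the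
  equivalence relation generated by realization_rel; points are equivalence classes.\<close>
definition realization ::
  "(nat \<Rightarrow> 'x set) \<Rightarrow> (nat \<Rightarrow> nat \<Rightarrow> (nat \<Rightarrow> nat) \<Rightarrow> 'x \<Rightarrow> 'x)
    \<Rightarrow> (nat \<times> ('x \<times> (nat \<Rightarrow> real))) set topology" where
  "realization X act = quotient_topology (realization_pre X)
     (\<lambda>p. {q \<in> topspace (realization_pre X). equivclp (realization_rel X act) p q})"

end

theory Submission
  imports Defs
begin

text \<open>The dummy admits an extra degeneracy E: shifting the values of a partial map
  b : [m] \<rightharpoonup> [n+1] down by one, dropping the points sent to 0, turns an n-simplex f into
  the (n+1)-simplex E f = (b \<mapsto> f (b - 1)).  Its face d_0 (E f) is f again, and its vertex 0
  is the constant 0-simplex 1, because b - 1 has empty domain when b only takes the value 0.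
  So every simplex is coned off to one point, and (s, [x, t]) \<mapsto> [E x, (s, (1 - s) t)] is a
  homotopy from the identity of |G~| to the constant map at that point.  Only the base points
  of G enter, not its group structure.\<close>

section \<open>Quotient and sum topologies\<close>

lemma openin_quotient_topology:
  "openin (quotient_topology X f) U \<longleftrightarrow> U \<subseteq> f ` topspace X \<and> openin X {x \<in> topspace X. f x \<in> U}"
  unfolding quotient_topology_def topology_inverse'[OF istopology_quotient_topology] by simp

lemma topspace_quotient_topology: "topspace (quotient_topology X f) = f ` topspace X"
proof
  show "topspace (quotient_topology X f) \<subseteq> f ` topspace X"
    using openin_quotient_topology[of X f "topspace (quotient_topology X f)"] by simp
  have "{x \<in> topspace X. f x \<in> f ` topspace X} = topspace X" by auto
  then have "openin (quotient_topology X f) (f ` topspace X)"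
    by (simp add: openin_quotient_topology)
  then show "f ` topspace X \<subseteq> topspace (quotient_topology X f)"
    by (rule openin_subset)
qed

lemma quotient_map_quotient_topology: "quotient_map X (quotient_topology X f) f"
  unfolding quotient_map_def topspace_quotient_topology
  by (auto simp: openin_quotient_topology)

lemma continuous_map_snd_component:
  assumes "i \<in> I"
  shows "continuous_map (subtopology (sum_topology Y I) (Pair i ` topspace (Y i))) (Y i) snd"
proof -
  obtain g where g: "homeomorphic_maps (Y i) (subtopology (sum_topology Y I) (Pair i ` topspace (Y i))) (Pair i) g"
    using embedding_map_component_injection[OF assms, of Y]
    unfolding embedding_map_def homeomorphic_map_maps by blast
  show ?thesis
  proof (rule continuous_map_eq)
    show "continuous_map (subtopology (sum_topology Y I) (Pair i ` topspace (Y i))) (Y i) g"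
      using g by (simp add: homeomorphic_maps_def)
    show "g x = snd x" if "x \<in> topspace (subtopology (sum_topology Y I) (Pair i ` topspace (Y i)))" for x
      using g that by (auto simp: homeomorphic_maps_def)
  qed
qed

lemma continuous_map_prod_sum_topology:
  assumes "\<And>i. i \<in> I \<Longrightarrow> continuous_map (prod_topology Z (Y i)) W (\<lambda>(z, y). f (z, (i, y)))"
  shows "continuous_map (prod_topology Z (sum_topology Y I)) W f"
proof -
  define C where "C i = topspace Z \<times> Pair i ` topspace (Y i)" for i
  show ?thesis
  proof (rule pasting_lemma[where T = C and f = "\<lambda>_. f" and I = I])
    fix i assume i: "i \<in> I"
    show "openin (prod_topology Z (sum_topology Y I)) (C i)"
      using open_map_component_injection[OF i, of Y]
      by (simp add: C_def open_map_def openin_prod_Times_iff)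
    have "continuous_map (subtopology (prod_topology Z (sum_topology Y I)) (C i))
            (prod_topology Z (Y i)) (\<lambda>w. (fst w, snd (snd w)))"
      unfolding C_def subtopology_Times subtopology_topspace continuous_map_paired
      by (simp add: continuous_map_fst
          continuous_map_compose[OF continuous_map_snd continuous_map_snd_component[OF i], unfolded o_def])
    then have "continuous_map (subtopology (prod_topology Z (sum_topology Y I)) (C i)) W
                 ((\<lambda>(z, y). f (z, (i, y))) \<circ> (\<lambda>w. (fst w, snd (snd w))))"
      using assms[OF i] by (rule continuous_map_compose)
    then show "continuous_map (subtopology (prod_topology Z (sum_topology Y I)) (C i)) W f"
      by (rule continuous_map_eq) (auto simp: C_def)
  qed (auto simp: C_def)
qed

section \<open>Cones on standard simplices\<close>

lemma mono_maps_le: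
  assumes "\<theta> \<in> mono_maps m n" "i \<le> m"
  shows "\<theta> i \<le> n"
  using assms unfolding mono_maps_def by (auto dest!: PiE_mem)

lemma mono_maps_mono:
  assumes "\<theta> \<in> mono_maps m n" "i \<le> j" "j \<le> m"
  shows "\<theta> i \<le> \<theta> j"
  using assms unfolding mono_maps_def by (auto intro: mono_onD)

text \<open>The join [0] \<star> \<theta> : [m+1] \<rightarrow> [n+1] of a monotone map \<theta> : [m] \<rightarrow> [n] with the
  cone vertex, and the point (1 - s) t + s e0 of the cone [0] \<star> \<Delta>^m = \<Delta>^(m+1).\<close>
definition cone_mono :: "nat \<Rightarrow> (nat \<Rightarrow> nat) \<Rightarrow> nat \<Rightarrow> nat" where
  "cone_mono m \<theta> = (\<lambda>i. if i \<le> Suc m then (if i = 0 then 0 else Suc (\<theta> (i - 1))) else undefined)"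

definition cone_coords :: "real \<Rightarrow> (nat \<Rightarrow> real) \<Rightarrow> nat \<Rightarrow> real" where
  "cone_coords s t = (\<lambda>j. if j = 0 then s else (1 - s) * t (j - 1))"

definition coface0 :: "nat \<Rightarrow> nat \<Rightarrow> nat" where
  "coface0 n = (\<lambda>i. if i \<le> n then Suc i else undefined)"

definition vertex0 :: "nat \<Rightarrow> nat" where
  "vertex0 = (\<lambda>i. if i = 0 then 0 else undefined)"

definition simplex_vertex0 :: "nat \<Rightarrow> real" where
  "simplex_vertex0 = (\<lambda>i. if i = 0 then 1 else 0)"

lemma cone_mono_mono_maps:
  assumes "\<theta> \<in> mono_maps m n"
  shows "cone_mono m \<theta> \<in> mono_maps (Suc m) (Suc n)"
proof -
  have "cone_mono m \<theta> \<in> {..Suc m} \<rightarrow>\<^sub>E {..Suc n}"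
    using mono_maps_le[OF assms] by (auto simp: cone_mono_def PiE_def extensional_def)
  moreover have "mono_on {..Suc m} (cone_mono m \<theta>)"
    by (rule mono_onI) (auto simp: cone_mono_def intro: mono_maps_mono[OF assms])
  ultimately show ?thesis by (simp add: mono_maps_def)
qed

lemma coface0_mono_maps: "coface0 n \<in> mono_maps n (Suc n)"
  by (auto simp: mono_maps_def coface0_def mono_on_def PiE_def extensional_def)

lemma vertex0_mono_maps: "vertex0 \<in> mono_maps 0 n"
  by (auto simp: mono_maps_def vertex0_def mono_on_def PiE_def extensional_def)

lemma simplex_vertex0_standard_simplex: "simplex_vertex0 \<in> standard_simplex 0"
  by (simp add: standard_simplex_def simplex_vertex0_def)

lemma cone_coords_standard_simplex:
  assumes "t \<in> standard_simplex m" "s \<in> {0..1}"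
  shows "cone_coords s t \<in> standard_simplex (Suc m)"
proof -
  have t: "\<And>i. 0 \<le> t i \<and> t i \<le> 1" "\<And>i. i > m \<Longrightarrow> t i = 0" "(\<Sum>i\<le>m. t i) = 1"
    using assms(1) by (auto simp: standard_simplex_def)
  have "(\<Sum>i\<le>Suc m. cone_coords s t i) = s + (\<Sum>i\<le>m. (1 - s) * t i)"
    by (simp only: sum.atMost_Suc_shift) (simp add: cone_coords_def)
  also have "\<dots> = 1" by (simp add: sum_distrib_left[symmetric] t(3))
  finally show ?thesis
    using t assms(2) unfolding standard_simplex_def cone_coords_def
    by (auto simp: mult_le_one)
qed

lemma simplex_push_cone_mono:
  "simplex_push (Suc m) (cone_mono m \<theta>) (cone_coords s t) = cone_coords s (simplex_push m \<theta> t)"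
proof (rule ext)
  fix j
  show "simplex_push (Suc m) (cone_mono m \<theta>) (cone_coords s t) j = cone_coords s (simplex_push m \<theta> t) j"
  proof (cases j)
    case 0
    have "{i. i \<le> Suc m \<and> cone_mono m \<theta> i = 0} = {0}" by (auto simp: cone_mono_def)
    then show ?thesis using 0 by (simp add: simplex_push_def cone_coords_def)
  next
    case (Suc j')
    have "{i. i \<le> Suc m \<and> cone_mono m \<theta> i = Suc j'} = Suc ` {i. i \<le> m \<and> \<theta> i = j'}"
      by (auto simp: cone_mono_def image_iff gr0_conv_Suc)
    then show ?thesis using Suc
      by (simp add: simplex_push_def sum.reindex cone_coords_def sum_distrib_left)
  qed
qed

lemma simplex_push_coface0:
  assumes "t \<in> standard_simplex n"
  shows "simplex_push n (coface0 n) t = cone_coords 0 t"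
proof (rule ext)
  fix j
  show "simplex_push n (coface0 n) t j = cone_coords 0 t j"
  proof (cases j)
    case 0
    then show ?thesis by (simp add: simplex_push_def cone_coords_def coface0_def)
  next
    case (Suc j')
    have "{i. i \<le> n \<and> coface0 n i = Suc j'} = (if j' \<le> n then {j'} else {})"
      by (auto simp: coface0_def)
    then show ?thesis using Suc assms
      by (auto simp: simplex_push_def cone_coords_def standard_simplex_def)
  qed
qed

lemma simplex_push_vertex0: "simplex_push 0 vertex0 simplex_vertex0 = cone_coords 1 t"
proof (rule ext)
  fix j
  have "{i. i \<le> 0 \<and> vertex0 i = j} = (if j = 0 then {0} else {})"
    by (auto simp: vertex0_def)
  then show "simplex_push 0 vertex0 simplex_vertex0 j = cone_coords 1 t j"
    unfolding simplex_push_def by (simp add: cone_coords_def simplex_vertex0_def)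
qed

lemma continuous_map_cone_coords:
  "continuous_map (prod_topology (top_of_set {0..1}) (subtopology (powertop_real UNIV) (standard_simplex m)))
     (subtopology (powertop_real UNIV) (standard_simplex (Suc m))) (\<lambda>(s, t). cone_coords s t)"
    (is "continuous_map ?P _ _")
proof -
  have s: "continuous_map ?P euclideanreal fst"
    by (rule continuous_map_into_fulltopology[of _ _ "{0..1::real}"]) (simp add: continuous_map_fst)
  have t: "continuous_map ?P euclideanreal (\<lambda>st. snd st j)" for j
  proof -
    have "continuous_map (subtopology (powertop_real UNIV) (standard_simplex m)) euclideanreal (\<lambda>x. x j)"
      using continuous_map_product_projection[of j UNIV "\<lambda>_. euclideanreal"]
      by (simp add: continuous_map_from_subtopology)
    from continuous_map_compose[OF continuous_map_snd this] show ?thesis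
      by (simp add: o_def)
  qed
  have "continuous_map ?P euclideanreal (\<lambda>st. cone_coords (fst st) (snd st) j)" for j
    unfolding cone_coords_def
    by (cases "j = 0") (simp_all add: s t continuous_map_real_mult continuous_map_diff)
  then show ?thesis
    by (auto simp: continuous_map_in_subtopology continuous_map_componentwise_UNIV case_prod_unfold
        intro: cone_coords_standard_simplex)
qed

section \<open>Realizations of simplicial sets with an extra degeneracy\<close>

lemma equivclp_map:
  assumes "\<And>x y. r x y \<Longrightarrow> r' (f x) (f y)" "equivclp r x y"
  shows "equivclp r' (f x) (f y)"
  using assms(2)
proof (induction rule: equivclp_induct)
  case (step y z)
  then show ?case
    using assms(1) by (blast intro: equivclp_into_equivclp)
qed simp

definition realization_class ::
  "(nat \<Rightarrow> 'x set) \<Rightarrow> (nat \<Rightarrow> nat \<Rightarrow> (nat \<Rightarrow> nat) \<Rightarrow> 'x \<Rightarrow> 'x)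
    \<Rightarrow> nat \<times> ('x \<times> (nat \<Rightarrow> real)) \<Rightarrow> (nat \<times> ('x \<times> (nat \<Rightarrow> real))) set" where
  "realization_class X act p = {q \<in> topspace (realization_pre X). equivclp (realization_rel X act) p q}"

lemma realization_quotient_topology:
  "realization X act = quotient_topology (realization_pre X) (realization_class X act)"
  by (simp add: realization_def realization_class_def[abs_def])

lemma realization_class_eq:
  assumes "equivclp (realization_rel X act) p q"
  shows "realization_class X act p = realization_class X act q"
  using assms equivclp_sym[of "realization_rel X act"] equivclp_trans[of "realization_rel X act"]
  unfolding realization_class_def by blast

lemma topspace_realization_pre:
  "topspace (realization_pre X) = (SIGMA n:UNIV. X n \<times> standard_simplex n)"
  by (simp add: realization_pre_def o_def)

text \<open>E is an extra degeneracy s_(-1) : X_n \<rightarrow> X_(n+1) of X augmented over the point c,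
  stated through the cone [0] \<star> - : \<Delta> \<rightarrow> \<Delta> in the form the contraction needs.\<close>
definition extra_degeneracy ::
  "(nat \<Rightarrow> 'x set) \<Rightarrow> (nat \<Rightarrow> nat \<Rightarrow> (nat \<Rightarrow> nat) \<Rightarrow> 'x \<Rightarrow> 'x) \<Rightarrow> (nat \<Rightarrow> 'x \<Rightarrow> 'x) \<Rightarrow> 'x \<Rightarrow> bool" where
  "extra_degeneracy X act E c \<longleftrightarrow>
     (\<forall>n x. x \<in> X n \<longrightarrow> E n x \<in> X (Suc n)) \<and>
     (\<forall>m n \<theta> x. \<theta> \<in> mono_maps m n \<longrightarrow> x \<in> X n \<longrightarrow>
        E m (act m n \<theta> x) = act (Suc m) (Suc n) (cone_mono m \<theta>) (E n x)) \<and>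
     (\<forall>n x. x \<in> X n \<longrightarrow> act n (Suc n) (coface0 n) (E n x) = x) \<and>
     (\<forall>n x. x \<in> X n \<longrightarrow> act 0 (Suc n) vertex0 (E n x) = c)"

definition cone_lift ::
  "(nat \<Rightarrow> 'x \<Rightarrow> 'x) \<Rightarrow> real \<Rightarrow> nat \<times> ('x \<times> (nat \<Rightarrow> real)) \<Rightarrow> nat \<times> ('x \<times> (nat \<Rightarrow> real))" where
  "cone_lift E s p = (Suc (fst p), E (fst p) (fst (snd p)), cone_coords s (snd (snd p)))"

lemma cone_lift_Pair [simp]: "cone_lift E s (n, x, t) = (Suc n, E n x, cone_coords s t)"
  by (simp add: cone_lift_def)

lemma continuous_map_cone_lift:
  assumes E: "\<And>n x. x \<in> X n \<Longrightarrow> E n x \<in> X (Suc n)"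
  shows "continuous_map (prod_topology (top_of_set {0..1}) (realization_pre X)) (realization_pre X)
           (\<lambda>(s, p). cone_lift E s p)"
  unfolding realization_pre_def
proof (rule continuous_map_prod_sum_topology)
  fix n :: nat
  let ?D = "\<lambda>n. discrete_topology (X n)" and ?S = "\<lambda>n. subtopology (powertop_real UNIV) (standard_simplex n)"
  let ?P = "prod_topology (top_of_set {0..1}) (prod_topology (?D n) (?S n))"
  have "continuous_map ?P (?D (Suc n)) (E n \<circ> (fst \<circ> snd))"
    by (rule continuous_map_compose[OF continuous_map_compose[OF continuous_map_snd continuous_map_fst]])
      (simp add: E Pi_iff)
  moreover have "continuous_map ?P (?S (Suc n)) ((\<lambda>(s, t). cone_coords s t) \<circ> (\<lambda>w. (fst w, snd (snd w))))"
    by (intro continuous_map_compose[OF _ continuous_map_cone_coords])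
      (simp add: continuous_map_paired continuous_map_fst
        continuous_map_compose[OF continuous_map_snd continuous_map_snd, unfolded o_def])
  ultimately have "continuous_map ?P (prod_topology (?D (Suc n)) (?S (Suc n)))
                     (\<lambda>w. (E n (fst (snd w)), cone_coords (fst w) (snd (snd w))))"
    by (simp add: continuous_map_paired comp_def)
  then have "continuous_map ?P (sum_topology (\<lambda>n. prod_topology (?D n) (?S n)) UNIV)
               (Pair (Suc n) \<circ> (\<lambda>w. (E n (fst (snd w)), cone_coords (fst w) (snd (snd w)))))"
    by (rule continuous_map_compose) (rule continuous_map_component_injection, simp)
  then show "continuous_map ?P (sum_topology (\<lambda>n. prod_topology (?D n) (?S n)) UNIV)
               (\<lambda>(s, y). case (s, n, y) of (s, p) \<Rightarrow> cone_lift E s p)"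
    by (simp add: comp_def case_prod_unfold cone_lift_def)
qed

lemma realization_rel_cone_lift:
  assumes E: "extra_degeneracy X act E c" and "realization_rel X act p q" and "s \<in> {0..1}"
  shows "realization_rel X act (cone_lift E s p) (cone_lift E s q)"
proof -
  from assms(2) obtain m n \<theta> x t where
    "\<theta> \<in> mono_maps m n" "x \<in> X n" "t \<in> standard_simplex m"
    "p = (m, act m n \<theta> x, t)" "q = (n, x, simplex_push m \<theta> t)"
    unfolding realization_rel_def by blast
  with E assms(3) show ?thesis
    unfolding realization_rel_def extra_degeneracy_def
    by (intro exI[of _ "Suc m"] exI[of _ "Suc n"] exI[of _ "cone_mono m \<theta>"] exI[of _ "E n x"]
        exI[of _ "cone_coords s t"])
      (simp add: cone_mono_mono_maps cone_coords_standard_simplex simplex_push_cone_mono)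
qed

lemma realization_class_cone_lift:
  assumes E: "extra_degeneracy X act E c" and "s \<in> {0..1}" and "p \<in> topspace (realization_pre X)"
    and "realization_class X act p = realization_class X act q"
  shows "realization_class X act (cone_lift E s p) = realization_class X act (cone_lift E s q)"
proof -
  have "p \<in> realization_class X act p"
    using assms(3) by (simp add: realization_class_def)
  then have "equivclp (realization_rel X act) q p"
    unfolding assms(4) by (simp add: realization_class_def)
  with realization_rel_cone_lift[OF E _ assms(2)]
  have "equivclp (realization_rel X act) (cone_lift E s p) (cone_lift E s q)"
    by (rule equivclp_map[OF _ equivclp_sym])
  then show ?thesis
    by (rule realization_class_eq)
qed

lemma realization_class_cone_lift_0:
  assumes E: "extra_degeneracy X act E c" and "p \<in> topspace (realization_pre X)"
  shows "realization_class X act (cone_lift E 0 p) = realization_class X act p"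
proof -
  obtain n x t where "p = (n, x, t)" "x \<in> X n" "t \<in> standard_simplex n"
    using assms(2) by (auto simp: topspace_realization_pre)
  with E have "realization_rel X act p (cone_lift E 0 p)"
    unfolding realization_rel_def extra_degeneracy_def
    by (intro exI[of _ n] exI[of _ "Suc n"] exI[of _ "coface0 n"] exI[of _ "E n x"] exI[of _ t])
      (simp add: coface0_mono_maps simplex_push_coface0)
  then have "equivclp (realization_rel X act) p (cone_lift E 0 p)"
    by blast
  from realization_class_eq[OF this] show ?thesis
    by simp
qed

lemma realization_class_cone_lift_1:
  assumes E: "extra_degeneracy X act E c" and "p \<in> topspace (realization_pre X)"
  shows "realization_class X act (cone_lift E 1 p) = realization_class X act (0, c, simplex_vertex0)"
proof -
  obtain n x t where "p = (n, x, t)" "x \<in> X n" "t \<in> standard_simplex n"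
    using assms(2) by (auto simp: topspace_realization_pre)
  with E have "realization_rel X act (0, c, simplex_vertex0) (cone_lift E 1 p)"
    unfolding realization_rel_def extra_degeneracy_def
    by (intro exI[of _ 0] exI[of _ "Suc n"] exI[of _ vertex0] exI[of _ "E n x"] exI[of _ simplex_vertex0])
      (simp add: vertex0_mono_maps simplex_push_vertex0[of t] simplex_vertex0_standard_simplex)
  then have "equivclp (realization_rel X act) (0, c, simplex_vertex0) (cone_lift E 1 p)"
    by blast
  from realization_class_eq[OF this] show ?thesis
    by simp
qed

lemma contractible_space_realization:
  assumes E: "extra_degeneracy X act E c"
  shows "contractible_space (realization X act)"
proof -
  let ?cls = "realization_class X act" and ?I = "top_of_set {0..1::real}"
  have Q: "quotient_map (realization_pre X) (realization X act) ?cls"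
    unfolding realization_quotient_topology by (rule quotient_map_quotient_topology)
  then have Q2: "quotient_map (prod_topology ?I (realization_pre X)) (prod_topology ?I (realization X act))
                   (\<lambda>(s, p). (s, ?cls p))"
    by (intro quotient_map_prod_right)
      (simp_all add: compact_imp_locally_compact_space compact_space_subtopology Hausdorff_space_subtopology)
  let ?h = "?cls \<circ> (\<lambda>(s, p). cone_lift E s p)"
  have cont: "continuous_map (prod_topology ?I (realization_pre X)) (realization X act) ?h"
    using E unfolding extra_degeneracy_def
    by (intro continuous_map_compose[OF continuous_map_cone_lift quotient_imp_continuous_map[OF Q]]) blast
  have wd: "?h x = ?h y" if x: "x \<in> topspace (prod_topology ?I (realization_pre X))"
    and "y \<in> topspace (prod_topology ?I (realization_pre X))"
    and xy: "(\<lambda>(s, p). (s, ?cls p)) x = (\<lambda>(s, p). (s, ?cls p)) y" for x y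
  proof -
    obtain s p q where "x = (s, p)" "y = (s, q)" "?cls p = ?cls q"
      using xy by (cases x; cases y) auto
    with x show ?thesis
      using realization_class_cone_lift[OF E, of s p q] by simp
  qed
  obtain g where g: "continuous_map (prod_topology ?I (realization X act)) (realization X act) g"
    "\<And>x. x \<in> topspace (prod_topology ?I (realization_pre X)) \<Longrightarrow> g ((\<lambda>(s, p). (s, ?cls p)) x) = ?h x"
    by (metis quotient_map_lift_exists[OF Q2 cont wd])
  have "homotopic_with (\<lambda>x. True) (realization X act) (realization X act) id (\<lambda>x. ?cls (0, c, simplex_vertex0))"
  proof (subst homotopic_with, simp, intro exI[of _ g] conjI ballI)
    fix C assume "C \<in> topspace (realization X act)"
    then obtain p where p: "p \<in> topspace (realization_pre X)" "C = ?cls p"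
      by (auto simp: realization_quotient_topology topspace_quotient_topology)
    show "g (0, C) = id C"
      using g(2)[of "(0, p)"] p realization_class_cone_lift_0[OF E p(1)] by simp
    show "g (1, C) = ?cls (0, c, simplex_vertex0)"
      using g(2)[of "(1, p)"] p realization_class_cone_lift_1[OF E p(1)] by simp
  qed (simp_all add: g(1))
  then show ?thesis
    unfolding contractible_space_def by blast
qed

section \<open>The extra degeneracy of the dummy\<close>

lemma Bmark_Bset: "Bmark \<in> Bset n m"
  by (simp add: Bset_def Bmark_def)

lemma mem_Bset:
  "b \<in> Bset n m \<longleftrightarrow> (\<forall>i k. b i = Some k \<longrightarrow> i \<le> m \<and> k \<le> n) \<and>
     (\<forall>i j k l. i \<le> j \<longrightarrow> b i = Some k \<longrightarrow> b j = Some l \<longrightarrow> k \<le> l)"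
  by (simp add: Bset_def)

definition Bshift :: "(nat \<Rightarrow> nat option) \<Rightarrow> nat \<Rightarrow> nat option" where
  "Bshift b = (\<lambda>i. case b i of None \<Rightarrow> None | Some k \<Rightarrow> (if k = 0 then None else Some (k - 1)))"

lemma Bshift_eq_Some: "Bshift b i = Some k \<longleftrightarrow> b i = Some (Suc k)"
  by (auto simp: Bshift_def split: option.splits)

lemma Bshift_Bmark: "Bshift Bmark = Bmark"
  by (simp add: Bshift_def Bmark_def)

lemma Bshift_Bset: "b \<in> Bset (Suc n) m \<Longrightarrow> Bshift b \<in> Bset n m"
  unfolding mem_Bset Bshift_eq_Some by fastforce

lemma Bshift_Bprecomp: "Bshift (Bprecomp m' b \<theta>) = Bprecomp m' (Bshift b) \<theta>"
  by (auto simp: Bshift_def Bprecomp_def fun_eq_iff)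

lemma Bprecomp_Bset:
  assumes "b \<in> Bset n m" "\<theta> \<in> mono_maps m' m"
  shows "Bprecomp m' b \<theta> \<in> Bset n m'"
  using assms mono_maps_le[OF assms(2)] mono_maps_mono[OF assms(2)] unfolding Bset_def Bprecomp_def
  by (auto split: if_splits) (meson le_trans)

lemma Bpostcomp_Bset:
  assumes "b \<in> Bset m k" "\<theta> \<in> mono_maps m n"
  shows "Bpostcomp \<theta> b \<in> Bset n k"
  using assms mono_maps_le[OF assms(2)] mono_maps_mono[OF assms(2)]
  unfolding Bset_def Bpostcomp_def by fastforce

lemma Bshift_Bpostcomp_cone_mono:
  assumes "b \<in> Bset (Suc m) k"
  shows "Bshift (Bpostcomp (cone_mono m \<theta>) b) = Bpostcomp \<theta> (Bshift b)"
proof (rule ext)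
  fix i
  show "Bshift (Bpostcomp (cone_mono m \<theta>) b) i = Bpostcomp \<theta> (Bshift b) i"
    using assms by (cases "b i") (auto simp: Bset_def Bshift_def Bpostcomp_def cone_mono_def)
qed

definition dummy_shift :: "nat \<Rightarrow> (nat \<Rightarrow> (nat \<Rightarrow> nat option) \<Rightarrow> 'g) \<Rightarrow> nat \<Rightarrow> (nat \<Rightarrow> nat option) \<Rightarrow> 'g" where
  "dummy_shift n f = (\<lambda>m b. if b \<in> Bset (Suc n) m then f m (Bshift b) else undefined)"

definition dummy_unit :: "(nat \<Rightarrow> 'g monoid) \<Rightarrow> nat \<Rightarrow> (nat \<Rightarrow> nat option) \<Rightarrow> 'g" where
  "dummy_unit Gr = (\<lambda>m b. if b \<in> Bset 0 m then \<one>\<^bsub>Gr m\<^esub> else undefined)"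

lemma dummy_shift_dummy_simplices:
  "f \<in> dummy_simplices Gr act n \<Longrightarrow> dummy_shift n f \<in> dummy_simplices Gr act (Suc n)"
  unfolding dummy_simplices_def dummy_shift_def
  by (auto simp: Bshift_Bset Bshift_Bprecomp Bprecomp_Bset Bshift_Bmark Bmark_Bset)

lemma dummy_shift_dummy_act:
  assumes "\<theta> \<in> mono_maps m n"
  shows "dummy_shift m (dummy_act m n \<theta> f) = dummy_act (Suc m) (Suc n) (cone_mono m \<theta>) (dummy_shift n f)"
proof (intro ext)
  fix k b
  show "dummy_shift m (dummy_act m n \<theta> f) k b = dummy_act (Suc m) (Suc n) (cone_mono m \<theta>) (dummy_shift n f) k b"
  proof (cases "b \<in> Bset (Suc m) k")
    case True
    then show ?thesis
      using Bshift_Bset[OF True] Bpostcomp_Bset[OF True cone_mono_mono_maps[OF assms]]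
      by (simp add: dummy_shift_def dummy_act_def Bshift_Bpostcomp_cone_mono[OF True])
  qed (simp add: dummy_shift_def dummy_act_def)
qed

lemma Bshift_Bpostcomp_coface0: "b \<in> Bset n m \<Longrightarrow> Bshift (Bpostcomp (coface0 n) b) = b"
  by (rule ext) (auto simp: mem_Bset Bshift_def Bpostcomp_def coface0_def split: option.splits)

lemma Bshift_Bpostcomp_vertex0: "b \<in> Bset 0 m \<Longrightarrow> Bshift (Bpostcomp vertex0 b) = Bmark"
  by (rule ext) (auto simp: mem_Bset Bshift_def Bpostcomp_def vertex0_def Bmark_def split: option.splits)

lemma dummy_act_coface0_dummy_shift:
  assumes "f \<in> dummy_simplices Gr act n"
  shows "dummy_act n (Suc n) (coface0 n) (dummy_shift n f) = f"
proof (intro ext)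
  fix m b
  show "dummy_act n (Suc n) (coface0 n) (dummy_shift n f) m b = f m b"
  proof (cases "b \<in> Bset n m")
    case True
    then show ?thesis
      by (simp add: dummy_act_def dummy_shift_def Bpostcomp_Bset[OF True coface0_mono_maps]
          Bshift_Bpostcomp_coface0[OF True])
  qed (use assms in \<open>simp add: dummy_act_def dummy_simplices_def\<close>)
qed

lemma dummy_act_vertex0_dummy_shift:
  assumes "f \<in> dummy_simplices Gr act n"
  shows "dummy_act 0 (Suc n) vertex0 (dummy_shift n f) = dummy_unit Gr"
proof (intro ext)
  fix m b
  show "dummy_act 0 (Suc n) vertex0 (dummy_shift n f) m b = dummy_unit Gr m b"
  proof (cases "b \<in> Bset 0 m")
    case True
    then show ?thesis
      using assms
      by (simp add: dummy_act_def dummy_shift_def dummy_unit_def dummy_simplices_def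
          Bpostcomp_Bset[OF True vertex0_mono_maps] Bshift_Bpostcomp_vertex0[OF True])
  qed (simp add: dummy_act_def dummy_unit_def)
qed

lemma extra_degeneracy_dummy:
  "extra_degeneracy (dummy_simplices Gr act) dummy_act dummy_shift (dummy_unit Gr)"
  unfolding extra_degeneracy_def
  by (simp add: dummy_shift_dummy_simplices dummy_shift_dummy_act dummy_act_coface0_dummy_shift
      dummy_act_vertex0_dummy_shift)

theorem mainTheorem10:
  fixes Gr :: "nat \<Rightarrow> 'g monoid"
    and act :: "nat \<Rightarrow> nat \<Rightarrow> (nat \<Rightarrow> nat) \<Rightarrow> 'g \<Rightarrow> 'g"
  assumes "simplicial_group Gr act"
  shows "contractible_space (realization (dummy_simplices Gr act) dummy_act)"
  using extra_degeneracy_dummy by (rule contractible_space_realization)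

end
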